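(* Let $w>0$, $0<\lambda\le\frac12$ and $1\le E\le\frac{1}{2\lambda}$. Let $x:(0,\infty)\to(0,\infty)$ be differentiable and strictly decreasing with $\frac{x(p)}{p}\le -x'(p)\le E\frac{x(p)}{p}$ for all $p>0$. Define the update $p'=p\big(1+\lambda\min\{1,\frac{x(p)-w}{w}\}\big)$ and the potential $\phi(p)=|x(p)-w|\,p$. Then for every $p>0$, \[ \phi(p)-\phi(p')\ \ge\ w\,|p'-p|, \] where $w|p'-p|=\lambda\phi(p)$ if $x(p)\le 2w$, and $w|p'-p|=\lambda\frac{w}{x(p)-w}\phi(p)$ if $x(p)\ge 2w$. Consequently, if $p_0>0$ and $p_{k+1}=p_k'$ for $k\ge 0$, then for all $k\ge 0$, \[ \phi(p_k)\le\Big(1-\lambda\min\Big\{1,\tfrac{w}{|x(p_0)-w|}\Big\}\Big)^k\phi(p_0). \] *)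

theory Defs
  imports "HOL-Analysis.Analysis"
begin

definition upd :: "(real \<Rightarrow> real) \<Rightarrow> real \<Rightarrow> real \<Rightarrow> real \<Rightarrow> real" where
  "upd x w lam p = p * (1 + lam * min 1 ((x p - w) / w))"

definition phi :: "(real \<Rightarrow> real) \<Rightarrow> real \<Rightarrow> real \<Rightarrow> real" where
  "phi x w p = \<bar>x p - w\<bar> * p"

end

theory Submission
  imports Defs
begin

(*
  Two consequences of the elasticity bounds drive everything (mean value theorem):
  revenue x(p) p is non-increasing, and the demand drops by at most E x(a)/a per
  unit price increase beyond a.  The step also keeps the
  demand below max(2w, x p0), which turns w |p' - p| into a uniform fraction
  lam min{1, w/|x p0 - w|} of the potential; iterating gives geometric decay.
*)

section \<open>Polynomial inequalities behind the one-step estimate\<close>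

lemma overdemand_core_ineq:
  fixes w X Y a m :: real
  assumes w: "w > 0" and X: "X > w" and a: "0 \<le> a" "a \<le> m / 2"
    and m: "m = min 1 ((X - w) / w)" and Y: "Y \<ge> X * (1 - m / 2)"
  shows "X + Y * (1 + a) \<ge> 2 * w * (1 + a)"
proof -
  have m_pos: "0 < m" and m_le1: "m \<le> 1" using m w X by auto
  have "Y * (1 + a) \<ge> X * (1 - m / 2) * (1 + a)"
    using Y a m_pos by (intro mult_right_mono) auto
  moreover have "X * (1 + (1 - m / 2) * (1 + a)) \<ge> 2 * w * (1 + a)"
  proof (cases "(X - w) / w \<ge> 1")
    case True
    hence "m = 1" "X \<ge> 2 * w" using m w by (auto simp: field_simps)
    hence "X * (1 + (1 - m / 2) * (1 + a)) \<ge> (2 * w) * (1 + (1 - m / 2) * (1 + a))"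
      using a by (intro mult_right_mono) auto
    moreover have "w * a \<le> w * 1" using w a \<open>m = 1\<close> by (intro mult_left_mono) auto
    ultimately show ?thesis using \<open>m = 1\<close> by (simp add: field_simps)
  next
    case False
    hence X_eq: "X = w * (1 + m)" using m w by (simp add: field_simps)
    have "(1 + m) * (1 - m / 2) \<ge> 1" using m_pos m_le1 by (simp add: algebra_simps)
    hence "(1 + m) * (1 - m / 2) * (1 + a) \<ge> 1 + a"
      using a m_pos mult_right_mono[of 1 "(1 + m) * (1 - m / 2)" "1 + a"] by simp
    moreover have "(1 + m) * (1 + (1 - m / 2) * (1 + a)) = (1 + m) + (1 + m) * (1 - m / 2) * (1 + a)"
      by (simp add: algebra_simps)
    ultimately have "(1 + m) * (1 + (1 - m / 2) * (1 + a)) \<ge> 2 * (1 + a)"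
      using a m_pos by argo
    hence "w * ((1 + m) * (1 + (1 - m / 2) * (1 + a))) \<ge> w * (2 * (1 + a))"
      using w by (intro mult_left_mono) auto
    thus ?thesis unfolding X_eq by (simp add: algebra_simps)
  qed
  ultimately show ?thesis by (simp add: algebra_simps)
qed

text \<open>The key step is the
  quadratic estimate X r^2 \<le> (2 w r - X)(r - t/2).\<close>
lemma underdemand_core_ineq:
  fixes w t l X Y r :: real
  assumes w: "w > 0" and t: "0 < t" "t < 1" and l: "0 < l" "l \<le> 1/2"
    and X: "X = w * (1 - t)" and r: "r = 1 - l * t"
    and Y: "Y * (r - t / 2) \<le> X * r"
  shows "Y * r \<le> 2 * w * r - X"
proof -
  define g where "g = (3/2 - l) - t * (1/2 + 2*l - l^2) + l^2 * t^2"
  have "l^2 * (1 + t) \<le> l^2 * 2" using t by (intro mult_left_mono) auto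
  moreover have "l * (2 - 3 * l) \<ge> 0" using l by simp
  ultimately have "1/2 + 2*l - l^2 - l^2 * (1 + t) \<ge> 0"
    by (simp add: algebra_simps power2_eq_square)
  hence "(1 - t) * (1/2 + 2*l - l^2 - l^2 * (1 + t)) + (1 - l) * (1 - 2*l) \<ge> 0"
    using t l by simp
  moreover have "g = (1 - t) * (1/2 + 2*l - l^2 - l^2 * (1 + t)) + (1 - l) * (1 - 2*l)"
    unfolding g_def by (simp add: field_simps power2_eq_square)
  ultimately have "g \<ge> 0" by simp
  moreover have "(2 * w * r - X) * (r - t/2) - X * r * r = w * t * g"
    unfolding X r g_def
    by (simp add: algebra_simps power2_eq_square diff_divide_distrib add_divide_distrib)
  ultimately have quad: "X * r * r \<le> (2 * w * r - X) * (r - t/2)"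
    using w t by (simp add: algebra_simps)
  have "l * t \<le> (1/2) * t" using l t by (intro mult_right_mono) auto
  hence r_gap: "r - t / 2 > 0" using r t by linarith
  have "l * t < 1" using l t mult_strict_mono[of l 1 t 1] by simp
  hence "r > 0" using r by simp
  hence "Y * (r - t / 2) * r \<le> X * r * r" using Y by (intro mult_right_mono) auto
  also have "\<dots> \<le> (2 * w * r - X) * (r - t / 2)" by (rule quad)
  finally have "(Y * r) * (r - t / 2) \<le> (2 * w * r - X) * (r - t / 2)"
    by (simp add: algebra_simps)
  thus ?thesis using r_gap by simp
qed

lemma step_size_small_demand:
  assumes w: "w > 0" and p: "p > 0" and lam: "lam \<ge> 0" and X: "x p \<le> 2 * w"
  shows "w * \<bar>upd x w lam p - p\<bar> = lam * phi x w p"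
proof -
  have "(x p - w) / w \<le> 1" using X w by (simp add: field_simps)
  hence "upd x w lam p - p = (p * lam / w) * (x p - w)"
    unfolding upd_def by (simp add: min_absorb2 algebra_simps)
  hence "w * \<bar>upd x w lam p - p\<bar> = w * ((p * lam / w) * \<bar>x p - w\<bar>)"
    using w p lam by (simp add: abs_mult)
  thus ?thesis using w by (simp add: phi_def)
qed

lemma step_size_large_demand:
  assumes w: "w > 0" and p: "p > 0" and lam: "lam \<ge> 0" and X: "x p \<ge> 2 * w"
  shows "w * \<bar>upd x w lam p - p\<bar> = lam * (w / (x p - w)) * phi x w p"
proof -
  have "(x p - w) / w \<ge> 1" using X w by (simp add: field_simps)
  hence "upd x w lam p - p = p * lam" unfolding upd_def by (simp add: algebra_simps)
  thus ?thesis using w p lam X by (simp add: phi_def abs_mult field_simps)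
qed

lemma upd_at_equilibrium: "x p = w \<Longrightarrow> upd x w lam p = p"
  unfolding upd_def by simp

section \<open>Demand with elasticity between 1 and E\<close>

locale elastic_demand =
  fixes x :: "real \<Rightarrow> real" and w lam E :: real
  assumes w_pos: "w > 0"
    and lam: "0 < lam" "lam \<le> 1/2"
    and E: "1 \<le> E" "E \<le> 1 / (2 * lam)"
    and x_pos: "\<And>p. p > 0 \<Longrightarrow> x p > 0"
    and x_diff: "\<And>p. p > 0 \<Longrightarrow> x differentiable (at p)"
    and x_decr: "\<And>p q. 0 < p \<Longrightarrow> p < q \<Longrightarrow> x q < x p"
    and x_elast: "\<And>p. p > 0 \<Longrightarrow> x p / p \<le> - deriv x p \<and> - deriv x p \<le> E * x p / p"
begin

lemma x_has_deriv: "z > 0 \<Longrightarrow> (x has_real_derivative deriv x z) (at z)"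
  using x_diff DERIV_deriv_iff_real_differentiable by blast

lemma E_lam: "E * lam \<le> 1/2"
  using E(2) lam(1) by (simp add: field_simps)

text \<open>Elasticity at least 1: revenue x(p) p does not increase with the price.\<close>
lemma revenue_antimono:
  assumes "0 < a" "a < b"
  shows "x b * b \<le> x a * a"
proof -
  have "\<And>z. a \<le> z \<Longrightarrow> z \<le> b \<Longrightarrow> ((\<lambda>q. x q * q) has_real_derivative deriv x z * z + x z) (at z)"
    using assms x_has_deriv by (auto intro!: derivative_eq_intros)
  from MVT2[OF assms(2) this] obtain z where z: "a < z" "z < b"
    and mvt: "x b * b - x a * a = (b - a) * (deriv x z * z + x z)" by blast
  have "x z \<le> - deriv x z * z"
    using x_elast[of z] z assms by (simp add: divide_le_eq)
  hence "(b - a) * (deriv x z * z + x z) \<le> 0"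
    using assms by (simp add: mult_nonneg_nonpos)
  thus ?thesis using mvt by simp
qed

text \<open>Elasticity at most E: from price a to a larger price b the demand drops by at
  most E x(a)/a (b - a), since x(z)/z \<le> x(a)/a on [a, b].\<close>
lemma demand_drop_bound:
  assumes "0 < a" "a < b"
  shows "x a - x b \<le> E * x a / a * (b - a)"
proof -
  have "\<And>z. a \<le> z \<Longrightarrow> z \<le> b \<Longrightarrow> (x has_real_derivative deriv x z) (at z)"
    using assms x_has_deriv by auto
  from MVT2[OF assms(2) this] obtain z where z: "a < z" "z < b"
    and mvt: "x b - x a = (b - a) * deriv x z" by blast
  have "x z / z \<le> x a / a"
    using x_decr[of a z] x_pos[of z] z assms by (simp add: frac_le)
  hence "E * x z / z \<le> E * x a / a"
    using E mult_left_mono[of "x z / z" "x a / a" E] by simp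
  hence "- deriv x z \<le> E * x a / a" using x_elast[of z] z assms by auto
  hence "(b - a) * (- deriv x z) \<le> (b - a) * (E * x a / a)"
    using assms by (intro mult_left_mono) auto
  thus ?thesis using mvt by (simp add: algebra_simps)
qed


text \<open>The update keeps prices positive, since the relative change exceeds -lam \<ge> -1/2.\<close>
lemma upd_pos:
  assumes p: "p > 0"
  shows "upd x w lam p > 0"
proof -
  have "(x p - w) / w > -1" using x_pos[OF p] w_pos by (simp add: field_simps)
  hence "lam * min 1 ((x p - w) / w) > lam * (-1)" using lam by (intro mult_strict_left_mono) auto
  thus ?thesis using p lam unfolding upd_def by simp
qed

lemma overdemand_step:
  assumes p: "p > 0" and over: "x p > w"
  shows "p < upd x w lam p" "x (upd x w lam p) \<le> x p"
    and "phi x w p - phi x w (upd x w lam p) \<ge> w * (upd x w lam p - p)"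
proof -
  define X m q where "X = x p" and "m = min 1 ((X - w) / w)" and "q = upd x w lam p"
  define a where "a = lam * m"
  have q: "q = p * (1 + a)" unfolding q_def upd_def a_def m_def X_def ..
  have m: "0 < m" "m \<le> 1" using over w_pos unfolding m_def X_def by auto
  have a: "0 < a" "a \<le> m / 2"
    using m lam mult_right_mono[of lam "1/2" m] unfolding a_def by auto
  have "p < q" using q p a by simp
  have revenue: "x q * q \<le> X * p" using revenue_antimono[OF p \<open>p < q\<close>] X_def by simp
  have "x q < X" using x_decr[OF p \<open>p < q\<close>] X_def by simp
  have "X - x q \<le> E * X / p * (q - p)" using demand_drop_bound[OF p \<open>p < q\<close>] X_def by simp
  also have "\<dots> = (E * lam) * m * X" using q p unfolding a_def by (simp add: field_simps)
  also have "\<dots> \<le> (1/2) * m * X"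
    using E_lam m x_pos[OF p] X_def by (intro mult_right_mono) auto
  finally have new_demand: "x q \<ge> X * (1 - m / 2)" by (simp add: algebra_simps)
  have "(X - w) * p - \<bar>x q - w\<bar> * q \<ge> w * (q - p)"
  proof (cases "x q \<ge> w")
    case True
    thus ?thesis using revenue by (simp add: algebra_simps)
  next
    case False
    have "X + x q * (1 + a) \<ge> 2 * w * (1 + a)"
      using overdemand_core_ineq[OF w_pos _ _ _ m_def new_demand] over a X_def by simp
    hence "(X + x q * (1 + a)) * p \<ge> (2 * w * (1 + a)) * p" using p by (intro mult_right_mono) auto
    hence "X * p + x q * q \<ge> 2 * w * q" using q by (simp add: algebra_simps)
    thus ?thesis using False by (simp add: algebra_simps)
  qed
  thus "p < upd x w lam p" "x (upd x w lam p) \<le> x p"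
    and "phi x w p - phi x w (upd x w lam p) \<ge> w * (upd x w lam p - p)"
    using \<open>p < q\<close> \<open>x q < X\<close> over unfolding phi_def q_def X_def by auto
qed

lemma underdemand_step:
  assumes p: "p > 0" and under: "x p < w"
  shows "upd x w lam p < p" "x (upd x w lam p) \<le> 2 * w"
    and "phi x w p - phi x w (upd x w lam p) \<ge> w * (p - upd x w lam p)"
proof -
  define X t q where "X = x p" and "t = (w - X) / w" and "q = upd x w lam p"
  define r where "r = 1 - lam * t"
  have t: "0 < t" "t < 1" using under x_pos[OF p] w_pos unfolding t_def X_def by (auto simp: field_simps)
  have X: "X = w * (1 - t)" unfolding t_def using w_pos by (simp add: field_simps)
  have q: "q = p * r"
    using under w_pos unfolding q_def upd_def r_def t_def X_def by (simp add: field_simps)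
  have "lam * t > 0" using lam t by simp
  moreover have "lam * t < 1" using lam t mult_strict_mono[of lam 1 t 1] by simp
  ultimately have r: "0 < r" "r < 1" unfolding r_def by auto
  have "q > 0" "q < p" using q r p by auto
  have revenue: "X * p \<le> x q * q" using revenue_antimono[OF \<open>q > 0\<close> \<open>q < p\<close>] X_def by simp
  have "x q > X" using x_decr[OF \<open>q > 0\<close> \<open>q < p\<close>] X_def by simp
  have ineq: "(w - X) * p - \<bar>x q - w\<bar> * q \<ge> w * (p - q) \<and> x q \<le> 2 * w"
  proof (cases "x q \<le> w")
    case True
    thus ?thesis using revenue w_pos by (simp add: algebra_simps)
  next
    case False
    have "(x q - X) * q \<le> (E * x q / q * (p - q)) * q"
      using demand_drop_bound[OF \<open>q > 0\<close> \<open>q < p\<close>] \<open>q > 0\<close> X_def by (intro mult_right_mono) auto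
    also have "\<dots> = E * x q * (p - q)" using \<open>q > 0\<close> by simp
    also have "\<dots> = p * ((E * lam) * t * x q)"
      unfolding q r_def by (simp add: right_diff_distrib[symmetric] algebra_simps)
    also have "\<dots> \<le> p * ((1/2) * t * x q)"
      using p E_lam t \<open>x q > X\<close> x_pos[OF p] X_def by (intro mult_left_mono mult_right_mono) auto
    finally have "p * ((x q - X) * r) \<le> p * ((1/2) * t * x q)" using q by (simp add: algebra_simps)
    hence "(x q - X) * r \<le> (1/2) * t * x q" using p by (simp only: mult_le_cancel_left_pos)
    hence "x q * (r - t / 2) \<le> X * r" by (simp add: algebra_simps)
    hence bound: "x q * r \<le> 2 * w * r - X"
      by (rule underdemand_core_ineq[OF w_pos t lam X r_def])
    hence "x q * r < 2 * w * r" using x_pos[OF p] X_def by linarith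
    hence "x q < 2 * w" using r by simp
    moreover have "(x q * r) * p \<le> (2 * w * r - X) * p" using bound p by (intro mult_right_mono) auto
    ultimately show ?thesis using False q by (simp add: algebra_simps)
  qed
  thus "upd x w lam p < p" "x (upd x w lam p) \<le> 2 * w"
    and "phi x w p - phi x w (upd x w lam p) \<ge> w * (p - upd x w lam p)"
    using \<open>q < p\<close> under unfolding phi_def q_def X_def by auto
qed


lemma potential_decrease:
  assumes p: "p > 0"
  shows "phi x w p - phi x w (upd x w lam p) \<ge> w * \<bar>upd x w lam p - p\<bar>"
proof (cases "x p" w rule: linorder_cases)
  case less
  thus ?thesis using underdemand_step[OF p] by simp
next
  case equal
  thus ?thesis using upd_at_equilibrium by simp
next
  case greater
  thus ?thesis using overdemand_step[OF p] by simp
qed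

lemma demand_bound_preserved:
  assumes p: "p > 0" and bound: "x p \<le> max (2 * w) B"
  shows "x (upd x w lam p) \<le> max (2 * w) B"
proof (cases "x p" w rule: linorder_cases)
  case less
  thus ?thesis using underdemand_step(2)[OF p] by simp
next
  case equal
  thus ?thesis using upd_at_equilibrium bound by simp
next
  case greater
  thus ?thesis using overdemand_step(2)[OF p] bound by simp
qed

lemma potential_contraction:
  assumes p: "p > 0" and bound: "x p \<le> max (2 * w) X0"
  shows "phi x w (upd x w lam p) \<le> (1 - lam * min 1 (w / \<bar>X0 - w\<bar>)) * phi x w p"
proof -
  define c where "c = min 1 (w / \<bar>X0 - w\<bar>)"
  have phi_nonneg: "phi x w p \<ge> 0" unfolding phi_def using p by simp
  have decrease: "phi x w (upd x w lam p) \<le> phi x w p - w * \<bar>upd x w lam p - p\<bar>"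
    using potential_decrease[OF p] by simp
  show ?thesis
  proof (cases "x p \<le> 2 * w")
    case True
    have "lam * c * phi x w p \<le> lam * 1 * phi x w p"
      unfolding c_def using lam phi_nonneg by (intro mult_right_mono mult_left_mono) auto
    thus ?thesis using decrease step_size_small_demand[where x = x, OF w_pos p less_imp_le[OF lam(1)] True]
      unfolding c_def by (simp add: algebra_simps)
  next
    case False
    hence X0: "x p \<le> X0" "X0 > 2 * w" using bound by auto
    have "w / (X0 - w) \<le> 1" using X0 w_pos by (simp add: field_simps)
    hence "c = w / (X0 - w)" unfolding c_def using X0 w_pos by (simp add: min_def)
    also have "\<dots> \<le> w / (x p - w)" using X0 False w_pos by (intro divide_left_mono) auto
    finally have "lam * c * phi x w p \<le> lam * (w / (x p - w)) * phi x w p"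
      using lam phi_nonneg by (intro mult_right_mono mult_left_mono) auto
    thus ?thesis using decrease step_size_large_demand[where x = x, OF w_pos p less_imp_le[OF lam(1)]] False
      unfolding c_def by (simp add: algebra_simps)
  qed
qed

lemma iterates_invariant:
  assumes p0: "ps 0 > 0" and rec: "\<And>k. ps (Suc k) = upd x w lam (ps k)"
  shows "ps k > 0 \<and> x (ps k) \<le> max (2 * w) (x (ps 0))"
proof (induction k)
  case 0
  thus ?case using p0 by simp
next
  case (Suc k)
  thus ?case using rec upd_pos demand_bound_preserved by simp
qed

lemma potential_geometric_decay:
  assumes p0: "ps 0 > 0" and rec: "\<And>k. ps (Suc k) = upd x w lam (ps k)"
  shows "phi x w (ps k) \<le> (1 - lam * min 1 (w / \<bar>x (ps 0) - w\<bar>)) ^ k * phi x w (ps 0)"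
proof (induction k)
  case 0
  thus ?case by simp
next
  case (Suc k)
  define c where "c = 1 - lam * min 1 (w / \<bar>x (ps 0) - w\<bar>)"
  have "lam * min 1 (w / \<bar>x (ps 0) - w\<bar>) \<le> lam * 1"
    using lam by (intro mult_left_mono) auto
  hence "c \<ge> 0" unfolding c_def using lam by linarith
  have "phi x w (ps (Suc k)) \<le> c * phi x w (ps k)"
    unfolding c_def rec using potential_contraction iterates_invariant[OF p0 rec] by blast
  also have "\<dots> \<le> c * (c ^ k * phi x w (ps 0))"
    using Suc \<open>c \<ge> 0\<close> unfolding c_def by (intro mult_left_mono) auto
  finally show ?case unfolding c_def by simp
qed

end

theorem mainTheorem5:
  fixes x :: "real \<Rightarrow> real" and w lam E :: real and ps :: "nat \<Rightarrow> real"
  assumes w_pos: "w > 0"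
    and lam: "0 < lam" "lam \<le> 1/2"
    and E: "1 \<le> E" "E \<le> 1 / (2 * lam)"
    and x_pos: "\<And>p. p > 0 \<Longrightarrow> x p > 0"
    and x_diff: "\<And>p. p > 0 \<Longrightarrow> x differentiable (at p)"
    and x_decr: "\<And>p q. 0 < p \<Longrightarrow> p < q \<Longrightarrow> x q < x p"
    and x_elast: "\<And>p. p > 0 \<Longrightarrow> x p / p \<le> - deriv x p \<and> - deriv x p \<le> E * x p / p"
    and p0: "ps 0 > 0"
    and rec: "\<And>k. ps (Suc k) = upd x w lam (ps k)"
  shows "(\<forall>p>0. phi x w p - phi x w (upd x w lam p) \<ge> w * \<bar>upd x w lam p - p\<bar>
                \<and> (x p \<le> 2 * w \<longrightarrow> w * \<bar>upd x w lam p - p\<bar> = lam * phi x w p)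
                \<and> (x p \<ge> 2 * w \<longrightarrow> w * \<bar>upd x w lam p - p\<bar> = lam * (w / (x p - w)) * phi x w p))
         \<and> (\<forall>k. phi x w (ps k) \<le> (1 - lam * min 1 (w / \<bar>x (ps 0) - w\<bar>)) ^ k * phi x w (ps 0))"
proof -
  interpret elastic_demand x w lam E
    using w_pos lam E x_pos x_diff x_decr x_elast by unfold_locales
  have "lam \<ge> 0" using lam by simp
  thus ?thesis
    using potential_decrease step_size_small_demand[OF w_pos] step_size_large_demand[OF w_pos]
      potential_geometric_decay[OF p0 rec] by blast
qed

end
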